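(* Let $n\ge2$, let $X\subset\mathbb{R}^n$ be finite with the Euclidean metric $d$, let $\epsilon>0$ and $A\subset X$. Then \[ B_\epsilon(A)\subset\bar A^{\mathfrak{m}}=\operatorname{int}(A)\cup(\partial A)^{\mathfrak{m}}. \]
   Context: $B_\epsilon(A)=\{p\in X: d(p,A)\le\epsilon\}$, where $d(p,A)=\inf_{a\in A}d(p,a)$. $\mathcal{Q}=\mathcal{Q}(\epsilon)$ is the collection of closed cubes $\{x\in\mathbb{R}^n: j_i\frac{\epsilon}{2\sqrt n}\le x_i\le (j_i+1)\frac{\epsilon}{2\sqrt n},\ i=1,\dots,n\}$, $j\in\mathbb{Z}^n$. For a cube $S\in\mathcal{Q}$ and integer $m\ge0$, $S^m=\{x\in\mathbb{R}^n:\max_i|x_i-s_i|\le m\frac{\epsilon}{2\sqrt n}\text{ for some }s\in S\}$. For $B\subset\mathbb{R}^n$, $\mathcal{I}(B)=\{S\in\mathcal{Q}: S\cap B\ne\emptyset\}$. A cube $S\in\mathcal{I}(A)$ is an interior cube of $A$ if $S^1\cap X\subset A$ and every cube $T\in\mathcal{Q}$ with $T\subset S^1$ lies in $\mathcal{I}(A)$; otherwise $S\in\mathcal{I}(A)$ is a boundary cube of $A$. $\operatorname{int}(A)$ is the union of the interior cubes, $\partial A$ the union of the boundary cubes, and $\bar A=\bigcup_{S\in\mathcal{I}(A)}S$. For $Y\subset\mathbb{R}^n$ and integer $N\ge0$, $Y^N=\bigcup_{S\in\mathcal{I}(Y)}S^N$. $\mathfrak{m}$ is the smallest integer with $\mathfrak{m}\ge2\sqrt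 n$. *)

theory Defs
  imports "HOL-Analysis.Analysis"
begin

definition side :: "real \<Rightarrow> 'n::finite itself \<Rightarrow> real" where
  "side eps _ = eps / (2 * sqrt (real CARD('n)))"

definition gcube :: "real \<Rightarrow> int^'n::finite \<Rightarrow> (real^'n) set" where
  "gcube eps j = {x. \<forall>i. of_int (j$i) * side eps TYPE('n) \<le> x$i
                        \<and> x$i \<le> (of_int (j$i) + 1) * side eps TYPE('n)}"

definition cubes :: "real \<Rightarrow> (real^'n::finite) set set" where
  "cubes eps = range (gcube eps)"

definition thicken :: "real \<Rightarrow> (real^'n::finite) set \<Rightarrow> nat \<Rightarrow> (real^'n) set" where
  "thicken eps S m = {x. \<exists>s\<in>S. \<forall>i. \<bar>x$i - s$i\<bar> \<le> real m * side eps TYPE('n)}"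

definition Icubes :: "real \<Rightarrow> (real^'n::finite) set \<Rightarrow> (real^'n) set set" where
  "Icubes eps B = {S\<in>cubes eps. S \<inter> B \<noteq> {}}"

definition interior_cube :: "real \<Rightarrow> (real^'n::finite) set \<Rightarrow> (real^'n) set \<Rightarrow> (real^'n) set \<Rightarrow> bool" where
  "interior_cube eps X A S \<longleftrightarrow> S \<in> Icubes eps A \<and> thicken eps S 1 \<inter> X \<subseteq> A
      \<and> (\<forall>T\<in>cubes eps. T \<subseteq> thicken eps S 1 \<longrightarrow> T \<in> Icubes eps A)"

definition boundary_cube :: "real \<Rightarrow> (real^'n::finite) set \<Rightarrow> (real^'n) set \<Rightarrow> (real^'n) set \<Rightarrow> bool" where
  "boundary_cube eps X A S \<longleftrightarrow> S \<in> Icubes eps A \<and> \<not> interior_cube eps X A S"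

definition cint :: "real \<Rightarrow> (real^'n::finite) set \<Rightarrow> (real^'n) set \<Rightarrow> (real^'n) set" where
  "cint eps X A = \<Union>{S. interior_cube eps X A S}"

definition cbdry :: "real \<Rightarrow> (real^'n::finite) set \<Rightarrow> (real^'n) set \<Rightarrow> (real^'n) set" where
  "cbdry eps X A = \<Union>{S. boundary_cube eps X A S}"

definition cclos :: "real \<Rightarrow> (real^'n::finite) set \<Rightarrow> (real^'n) set" where
  "cclos eps A = \<Union>(Icubes eps A)"

definition thickenset :: "real \<Rightarrow> (real^'n::finite) set \<Rightarrow> nat \<Rightarrow> (real^'n) set" where
  "thickenset eps Y N = (\<Union>S\<in>Icubes eps Y. thicken eps S N)"

definition frakm :: "'n::finite itself \<Rightarrow> nat" where
  "frakm _ = nat \<lceil>2 * sqrt (real CARD('n))\<rceil>"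

(* B_eps(A) = {p \<in> X. d(p,A) \<le> eps}, with d(p,{}) = +\<infinity> (so B_eps({}) = {}). *)
definition Beps :: "(real^'n::finite) set \<Rightarrow> real \<Rightarrow> (real^'n) set \<Rightarrow> (real^'n) set" where
  "Beps X eps A = {p\<in>X. A \<noteq> {} \<and> infdist p A \<le> eps}"

end

theory Submission
  imports Defs
begin

text \<open>
  A point of \<open>B\<^sub>\<epsilon>(A)\<close> lies within \<open>\<epsilon> \<le> m * side\<close> of a nearest point \<open>a \<in> A\<close>, hence
  in the \<open>m\<close>-thickening of the grid cube containing \<open>a\<close>. For the decomposition, let \<open>x\<close>
  lie in \<open>T\<^sup>m\<close> for a cube \<open>T\<close> meeting the cube closure of \<open>A\<close>, and walk from \<open>T\<close> one
  grid step at a time towards the cube containing \<open>x\<close>; \<open>x\<close> stays in the \<open>m\<close>-thickening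
  of every cube on the walk. While the current cube misses \<open>\<partial>A\<close> it is an interior cube
  of \<open>A\<close>: it meets some cube of \<open>A\<close>, which cannot be a boundary cube and therefore
  contains it in its 1-thickening. So its neighbours again meet the cube closure, and the
  walk either reaches a cube meeting \<open>\<partial>A\<close>, giving \<open>x \<in> (\<partial>A)\<^sup>m\<close>, or ends at an interior
  cube containing \<open>x\<close>.
\<close>

lemma side_pos: "eps > 0 \<Longrightarrow> side eps TYPE('n::finite) > 0"
  unfolding side_def by simp

lemma eps_le_frakm_side:
  assumes "eps \<ge> 0"
  shows "eps \<le> real (frakm TYPE('n::finite)) * side eps TYPE('n)"
proof -
  have "2 * sqrt (real CARD('n)) \<le> real (frakm TYPE('n))"
    unfolding frakm_def by linarith
  then have "2 * sqrt (real CARD('n)) * side eps TYPE('n) \<le> real (frakm TYPE('n)) * side eps TYPE('n)"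
    using assms by (intro mult_right_mono) (simp_all add: side_def)
  then show ?thesis
    by (simp add: side_def)
qed

lemma mem_gcube_iff:
  fixes j :: "int^'n::finite"
  assumes "eps > 0"
  shows "x \<in> gcube eps j \<longleftrightarrow>
    (\<forall>i. of_int (j$i) \<le> x$i / side eps TYPE('n) \<and> x$i / side eps TYPE('n) \<le> of_int (j$i) + 1)"
  using side_pos[where 'n='n, OF assms] by (simp add: gcube_def pos_le_divide_eq pos_divide_le_eq)

lemma mem_thicken_gcube_iff:
  fixes j :: "int^'n::finite"
  assumes "eps > 0"
  shows "x \<in> thicken eps (gcube eps j) m \<longleftrightarrow>
    (\<forall>i. of_int (j$i) - real m \<le> x$i / side eps TYPE('n)
        \<and> x$i / side eps TYPE('n) \<le> of_int (j$i) + 1 + real m)"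
    (is "_ \<longleftrightarrow> (\<forall>i. ?bounds i (x$i / ?s))")
proof
  assume "x \<in> thicken eps (gcube eps j) m"
  then obtain y where y: "y \<in> gcube eps j" and close: "\<forall>i. \<bar>x$i - y$i\<bar> \<le> real m * ?s"
    unfolding thicken_def by blast
  show "\<forall>i. ?bounds i (x$i / ?s)"
  proof
    fix i
    have "\<bar>x$i / ?s - y$i / ?s\<bar> \<le> real m"
      using close[rule_format, of i] side_pos[where 'n='n, OF assms]
      by (simp add: diff_divide_distrib[symmetric] divide_le_eq)
    moreover have "of_int (j$i) \<le> y$i / ?s" "y$i / ?s \<le> of_int (j$i) + 1"
      using y by (simp_all add: mem_gcube_iff[OF assms])
    ultimately show "?bounds i (x$i / ?s)"
      by (simp add: abs_le_iff)
  qed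
next
  assume bounds: "\<forall>i. ?bounds i (x$i / ?s)"
  define y where "y = (\<chi> i. ?s * max (j$i) (min (x$i / ?s) (j$i + 1)))"
  have "y \<in> gcube eps j"
    using side_pos[where 'n='n, OF assms] by (auto simp: mem_gcube_iff[OF assms] y_def)
  moreover have "\<bar>x$i - y$i\<bar> \<le> real m * ?s" for i
  proof -
    let ?c = "max (j$i) (min (x$i / ?s) (j$i + 1))"
    have "x$i - y$i = ?s * (x$i / ?s - ?c)"
      using side_pos[where 'n='n, OF assms] by (simp add: y_def right_diff_distrib)
    then have "\<bar>x$i - y$i\<bar> = ?s * \<bar>x$i / ?s - ?c\<bar>"
      using side_pos[where 'n='n, OF assms] by (simp add: abs_mult)
    also have "\<dots> \<le> ?s * real m"
      using bounds[rule_format, of i] side_pos[where 'n='n, OF assms]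
      by (intro mult_left_mono) (auto simp: abs_le_iff max_def min_def)
    finally show ?thesis
      by (simp add: mult.commute)
  qed
  ultimately show "x \<in> thicken eps (gcube eps j) m"
    unfolding thicken_def by blast
qed

lemma gcube_in_cubes: "gcube eps j \<in> cubes eps"
  unfolding cubes_def by blast

lemma gcube_Int_gcube_nonempty_iff:
  fixes j k :: "int^'n::finite"
  assumes "eps > 0"
  shows "gcube eps j \<inter> gcube eps k \<noteq> {} \<longleftrightarrow> (\<forall>i. \<bar>j$i - k$i\<bar> \<le> 1)"
proof
  assume "gcube eps j \<inter> gcube eps k \<noteq> {}"
  then obtain y where y: "y \<in> gcube eps j" "y \<in> gcube eps k"
    by blast
  show "\<forall>i. \<bar>j$i - k$i\<bar> \<le> 1"
  proof
    fix i
    have "real_of_int (j$i) \<le> of_int (k$i) + 1" "real_of_int (k$i) \<le> of_int (j$i) + 1"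
      using y unfolding mem_gcube_iff[OF assms] by (meson order_trans)+
    then show "\<bar>j$i - k$i\<bar> \<le> 1"
      by linarith
  qed
next
  assume adjacent: "\<forall>i. \<bar>j$i - k$i\<bar> \<le> 1"
  define y :: "real^'n" where "y = (\<chi> i. of_int (max (j$i) (k$i)) * side eps TYPE('n))"
  have "y$i / side eps TYPE('n) = of_int (max (j$i) (k$i))" for i
    using side_pos[where 'n='n, OF assms] by (simp add: y_def)
  moreover have "of_int (max (j$i) (k$i)) \<le> real_of_int (j$i) + 1"
    and "of_int (max (j$i) (k$i)) \<le> real_of_int (k$i) + 1" for i
    using adjacent[rule_format, of i] by (simp_all add: abs_le_iff max_def)
  ultimately have "y \<in> gcube eps j \<inter> gcube eps k"
    unfolding Int_iff mem_gcube_iff[OF assms] by simp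
  then show "gcube eps j \<inter> gcube eps k \<noteq> {}"
    by blast
qed

lemma gcube_subset_thicken_gcube:
  fixes j k :: "int^'n::finite"
  assumes "eps > 0" and adjacent: "\<forall>i. \<bar>j$i - k$i\<bar> \<le> 1"
  shows "gcube eps k \<subseteq> thicken eps (gcube eps j) 1"
proof
  fix x
  assume x: "x \<in> gcube eps k"
  show "x \<in> thicken eps (gcube eps j) 1"
    unfolding mem_thicken_gcube_iff[OF assms(1)]
  proof
    fix i
    have "of_int (k$i) \<le> x$i / side eps TYPE('n)" "x$i / side eps TYPE('n) \<le> of_int (k$i) + 1"
      using x unfolding mem_gcube_iff[OF assms(1)] by simp_all
    then show "of_int (j$i) - real 1 \<le> x$i / side eps TYPE('n)
        \<and> x$i / side eps TYPE('n) \<le> of_int (j$i) + 1 + real 1"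
      using adjacent[rule_format, of i] by (simp add: abs_le_iff)
  qed
qed

definition cube_index :: "real \<Rightarrow> real^'n::finite \<Rightarrow> int^'n" where
  "cube_index eps x = (\<chi> i. \<lfloor>x$i / side eps TYPE('n)\<rfloor>)"

lemma mem_gcube_cube_index: "eps > 0 \<Longrightarrow> x \<in> gcube eps (cube_index eps x)"
  by (simp add: mem_gcube_iff cube_index_def)

lemma gcube_nonempty: "eps > 0 \<Longrightarrow> gcube eps j \<noteq> {}"
  using gcube_Int_gcube_nonempty_iff[of eps j j] by simp

definition step_toward :: "int^'n::finite \<Rightarrow> int^'n \<Rightarrow> int^'n" where
  "step_toward k j = (\<chi> i. j$i + sgn (k$i - j$i))"

lemma step_toward_adjacent: "\<bar>j$i - step_toward k j $ i\<bar> \<le> 1"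
  by (simp add: step_toward_def sgn_if)

lemma step_toward_closer:
  assumes "j \<noteq> k"
  shows "(\<Sum>i\<in>UNIV. nat \<bar>step_toward k j $ i - k$i\<bar>) < (\<Sum>i\<in>UNIV. nat \<bar>j$i - k$i\<bar>)"
proof (rule sum_strict_mono_ex1)
  show "\<forall>i\<in>UNIV. nat \<bar>step_toward k j $ i - k$i\<bar> \<le> nat \<bar>j$i - k$i\<bar>"
    by (auto simp: step_toward_def sgn_if)
  obtain i where "j$i \<noteq> k$i"
    using assms by (metis vec_eq_iff)
  then show "\<exists>i\<in>UNIV. nat \<bar>step_toward k j $ i - k$i\<bar> < nat \<bar>j$i - k$i\<bar>"
    by (intro bexI[of _ i]) (auto simp: step_toward_def sgn_if)
qed simp

lemma mem_thicken_step_toward: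
  fixes j :: "int^'n::finite"
  assumes "eps > 0" and x: "x \<in> thicken eps (gcube eps j) m"
  shows "x \<in> thicken eps (gcube eps (step_toward (cube_index eps x) j)) m"
  unfolding mem_thicken_gcube_iff[OF assms(1)]
proof
  fix i
  let ?t = "x$i / side eps TYPE('n)"
  have t: "of_int (j$i) - real m \<le> ?t" "?t \<le> of_int (j$i) + 1 + real m"
    using x unfolding mem_thicken_gcube_iff[OF assms(1)] by simp_all
  have floor: "of_int \<lfloor>?t\<rfloor> \<le> ?t" "?t < of_int \<lfloor>?t\<rfloor> + 1"
    by linarith+
  consider "j$i < \<lfloor>?t\<rfloor>" | "j$i = \<lfloor>?t\<rfloor>" | "\<lfloor>?t\<rfloor> < j$i"
    by linarith
  then show "of_int (step_toward (cube_index eps x) j $ i) - real m \<le> ?t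
      \<and> ?t \<le> of_int (step_toward (cube_index eps x) j $ i) + 1 + real m"
    by cases (use t floor in \<open>simp_all add: step_toward_def cube_index_def, linarith+\<close>)
qed

lemma gcube_in_Icubes_iff: "gcube eps j \<in> Icubes eps B \<longleftrightarrow> gcube eps j \<inter> B \<noteq> {}"
  by (simp add: Icubes_def gcube_in_cubes)

lemma Icubes_mono: "B \<subseteq> C \<Longrightarrow> Icubes eps B \<subseteq> Icubes eps C"
  unfolding Icubes_def by blast

lemma thickenset_mono: "Y \<subseteq> Z \<Longrightarrow> thickenset eps Y N \<subseteq> thickenset eps Z N"
  unfolding thickenset_def using Icubes_mono by blast

lemma subset_thicken:
  fixes S :: "(real^'n::finite) set"
  assumes "eps > 0"
  shows "S \<subseteq> thicken eps S m"
  using side_pos[where 'n='n, OF assms] unfolding thicken_def by force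

lemma subset_thickenset:
  fixes Y :: "(real^'n::finite) set"
  assumes "eps > 0"
  shows "Y \<subseteq> thickenset eps Y N"
proof
  fix y
  assume "y \<in> Y"
  then have "gcube eps (cube_index eps y) \<in> Icubes eps Y"
    using mem_gcube_cube_index[OF assms] gcube_in_Icubes_iff by blast
  then show "y \<in> thickenset eps Y N"
    unfolding thickenset_def using mem_gcube_cube_index[OF assms] subset_thicken[OF assms] by blast
qed

lemma cint_subset_cclos: "cint eps X A \<subseteq> cclos eps A"
  unfolding cint_def cclos_def interior_cube_def by blast

lemma cbdry_subset_cclos: "cbdry eps X A \<subseteq> cclos eps A"
  unfolding cbdry_def cclos_def boundary_cube_def by blast

lemma Beps_subset_thickenset_cclos:
  fixes A :: "(real^'n::finite) set"
  assumes "eps > 0" and "closed A" and "eps \<le> real N * side eps TYPE('n)"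
  shows "Beps X eps A \<subseteq> thickenset eps (cclos eps A) N"
proof
  fix p
  assume "p \<in> Beps X eps A"
  then have "A \<noteq> {}" and "infdist p A \<le> eps"
    unfolding Beps_def by auto
  then obtain a where "a \<in> A" and dist_pa: "dist p a \<le> eps"
    using infdist_attains_inf[OF \<open>closed A\<close>] by metis
  let ?S = "gcube eps (cube_index eps a)"
  have "?S \<in> Icubes eps A"
    using \<open>a \<in> A\<close> mem_gcube_cube_index[OF assms(1)] gcube_in_Icubes_iff by blast
  then have "?S \<in> Icubes eps (cclos eps A)"
    using mem_gcube_cube_index[OF assms(1)] gcube_in_Icubes_iff unfolding cclos_def by blast
  moreover have "\<bar>p$i - a$i\<bar> \<le> real N * side eps TYPE('n)" for i
    using component_le_norm_cart[of "p - a" i] dist_pa assms(3) by (simp add: dist_norm)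
  then have "p \<in> thicken eps ?S N"
    unfolding thicken_def using mem_gcube_cube_index[OF assms(1)] by blast
  ultimately show "p \<in> thickenset eps (cclos eps A) N"
    unfolding thickenset_def by blast
qed

lemma interior_cube_if_not_meets_cbdry:
  assumes "eps > 0"
    and "gcube eps j \<in> Icubes eps (cclos eps A)"
    and "gcube eps j \<notin> Icubes eps (cbdry eps X A)"
  shows "interior_cube eps X A (gcube eps j)"
proof -
  obtain S where S: "S \<in> Icubes eps A" and meets: "S \<inter> gcube eps j \<noteq> {}"
    using assms(2) unfolding Icubes_def cclos_def by blast
  obtain i where Si: "S = gcube eps i"
    using S unfolding Icubes_def cubes_def by blast
  have "\<not> boundary_cube eps X A S"
    using assms(3) meets unfolding cbdry_def gcube_in_Icubes_iff by blast
  then have "interior_cube eps X A S"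
    using S unfolding boundary_cube_def by blast
  moreover have "gcube eps j \<subseteq> thicken eps S 1"
    using meets gcube_subset_thicken_gcube[OF assms(1)] gcube_Int_gcube_nonempty_iff[OF assms(1)]
    unfolding Si by (metis Int_commute)
  ultimately have "gcube eps j \<in> Icubes eps A"
    unfolding interior_cube_def using gcube_in_cubes by blast
  moreover have "\<not> boundary_cube eps X A (gcube eps j)"
    using assms(3) gcube_nonempty[OF assms(1)] unfolding cbdry_def gcube_in_Icubes_iff by blast
  ultimately show ?thesis
    unfolding boundary_cube_def by blast
qed

lemma thickenset_cclos_subset_cint_Un_thickenset_cbdry:
  fixes A X :: "(real^'n::finite) set"
  assumes "eps > 0"
  shows "thickenset eps (cclos eps A) N \<subseteq> cint eps X A \<union> thickenset eps (cbdry eps X A) N"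
    (is "_ \<subseteq> ?R")
proof
  fix x
  assume "x \<in> thickenset eps (cclos eps A) N"
  then obtain j0 where "gcube eps j0 \<in> Icubes eps (cclos eps A)" and "x \<in> thicken eps (gcube eps j0) N"
    unfolding thickenset_def Icubes_def cubes_def by blast
  define k where "k = cube_index eps x"
  have "x \<in> ?R" if "gcube eps j \<in> Icubes eps (cclos eps A)" and "x \<in> thicken eps (gcube eps j) N" for j
    using that
  proof (induction "\<Sum>i\<in>UNIV. nat \<bar>j$i - k$i\<bar>" arbitrary: j rule: less_induct)
    case less
    show ?case
    proof (cases "gcube eps j \<in> Icubes eps (cbdry eps X A)")
      case True
      then show ?thesis
        using less.prems(2) unfolding thickenset_def by blast
    next
      case False
      then have interior: "interior_cube eps X A (gcube eps j)"
        using interior_cube_if_not_meets_cbdry[OF assms less.prems(1)] by blast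
      show ?thesis
      proof (cases "j = k")
        case True
        then show ?thesis
          using interior mem_gcube_cube_index[OF assms] unfolding k_def cint_def by blast
      next
        case False
        have "gcube eps j \<subseteq> cclos eps A"
          using interior unfolding interior_cube_def cclos_def by blast
        then have "gcube eps (step_toward k j) \<in> Icubes eps (cclos eps A)"
          using gcube_Int_gcube_nonempty_iff[OF assms] step_toward_adjacent gcube_in_Icubes_iff
          by blast
        moreover have "x \<in> thicken eps (gcube eps (step_toward k j)) N"
          using mem_thicken_step_toward[OF assms less.prems(2)] unfolding k_def .
        ultimately show ?thesis
          using less.hyps step_toward_closer[OF False] by blast
      qed
    qed
  qed
  then show "x \<in> ?R"
    using \<open>gcube eps j0 \<in> Icubes eps (cclos eps A)\<close> \<open>x \<in> thicken eps (gcube eps j0) N\<close> .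
qed

theorem corollary4p4:
  fixes X A :: "(real^'n::finite) set" and eps :: real
  assumes "CARD('n) \<ge> 2" and "finite X" and "eps > 0" and "A \<subseteq> X"
  shows "Beps X eps A \<subseteq> thickenset eps (cclos eps A) (frakm TYPE('n))
       \<and> thickenset eps (cclos eps A) (frakm TYPE('n))
           = cint eps X A \<union> thickenset eps (cbdry eps X A) (frakm TYPE('n))"
proof -
  have "closed A"
    using finite_subset[OF assms(4,2)] by (rule finite_imp_closed)
  then have "Beps X eps A \<subseteq> thickenset eps (cclos eps A) (frakm TYPE('n))"
    using assms(3) eps_le_frakm_side[where 'n='n] by (intro Beps_subset_thickenset_cclos) auto
  moreover have "cint eps X A \<subseteq> thickenset eps (cclos eps A) (frakm TYPE('n))"
    using cint_subset_cclos subset_thickenset[OF assms(3)] by blast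
  moreover have "thickenset eps (cbdry eps X A) (frakm TYPE('n))
      \<subseteq> thickenset eps (cclos eps A) (frakm TYPE('n))"
    using cbdry_subset_cclos by (rule thickenset_mono)
  ultimately show ?thesis
    using thickenset_cclos_subset_cint_Un_thickenset_cbdry[OF assms(3)] by blast
qed

end
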